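(* In the setting of the context, suppose $\mathcal G_{el}$ is connected and for every $i\in\mathcal D$ the gains satisfy $k^C_{1,i}<1$, $k^C_{2,i}<R^C_{ti}$, $k^C_{3,i}>0$, $k^V_{1,i}<1$, $k^V_{2,i}<R^V_{ti}$, $0<k^V_{3,i}<\frac{1}{L^V_{ti}}(k^V_{1,i}-1)(k^V_{2,i}-R^V_{ti})$. Then the origin of the linear system $\dot{\mathbf x}=\mathbf F\mathbf x$, $\mathbf x\in\mathbb{R}^{5N}$, is asymptotically stable.
   Context: Let $N\ge1$, $\mathcal D=\{1,\dots,N\}$, $\mathcal G_{el}$ an undirected graph on $\mathcal D$ with neighbor sets $\mathcal N_i$; for each $i$ let $C_{ti},L^C_{ti},R^C_{ti},L^V_{ti},R^V_{ti},R_{Li}>0$ and for each edge $R_{ij}=R_{ji}>0$. Let $$F_i=\begin{bmatrix}0&\frac{1}{C_{ti}}&0&\frac{1}{C_{ti}}&0\\ \frac{k^C_{1,i}-1}{L^C_{ti}}&\frac{k^C_{2,i}-R^C_{ti}}{L^C_{ti}}&\frac{k^C_{3,i}}{L^C_{ti}}&0&0\\ 0&-1&0&0&0\\ \frac{k^V_{1,i}-1}{L^V_{ti}}&0&0&\frac{k^V_{2,i}-R^V_{ti}}{L^V_{ti}}&\frac{k^V_{3,i}}{L^V_{ti}}\\ -1&0&0&0&0\end{bmatrix},$$ $e_1=(1,0,0,0,0)^T$, and let $\mathbf F\in\mathbb{R}^{5N\times5N}$ have $(i,i)$ block $F_i-\Big(\frac{1}{R_{Li}C_{ti}}+\sum_{j\in\mathcal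 N_i}\frac{1}{R_{ij}C_{ti}}\Big)e_1e_1^T$ and $(i,j)$ block ($j\ne i$) equal to $\frac{1}{R_{ij}C_{ti}}e_1e_1^T$ if $j\in\mathcal N_i$, $0$ otherwise. (This is the closed-loop dynamics, with exogenous inputs set to zero, of a cluster of $N$ DC microgrids, each with state: bus voltage, current-controlled converter filter current, its error integrator, voltage-controlled converter filter current, its error integrator.) *)

theory Defs
  imports "HOL-Analysis.Analysis"
begin

definition is_solution :: "('a::real_normed_vector \<Rightarrow> 'a) \<Rightarrow> (real \<Rightarrow> 'a) \<Rightarrow> bool" where
  "is_solution f x \<longleftrightarrow>
     (\<forall>t\<ge>0. (x has_vector_derivative f (x t)) (at t within {0..}))"

definition asymptotically_stable_origin :: "('a::real_normed_vector \<Rightarrow> 'a) \<Rightarrow> bool" where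
  "asymptotically_stable_origin f \<longleftrightarrow>
     f 0 = 0 \<and>
     (\<forall>\<epsilon>>0. \<exists>\<delta>>0. \<forall>x. is_solution f x \<and> norm (x 0) < \<delta> \<longrightarrow> (\<forall>t\<ge>0. norm (x t) < \<epsilon>)) \<and>
     (\<exists>\<delta>>0. \<forall>x. is_solution f x \<and> norm (x 0) < \<delta> \<longrightarrow> (x \<longlongrightarrow> 0) at_top)"

definition E11 :: "real^5^5" where
  "E11 = (\<chi> r c. if r = 1 \<and> c = 1 then 1 else 0)"

definition Floc :: "real \<Rightarrow> real \<Rightarrow> real \<Rightarrow> real \<Rightarrow> real \<Rightarrow>
    real \<Rightarrow> real \<Rightarrow> real \<Rightarrow> real \<Rightarrow> real \<Rightarrow> real \<Rightarrow> real^5^5" where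
  "Floc Ct LC RC LV RV kC1 kC2 kC3 kV1 kV2 kV3 =
     vector [ vector [0, 1/Ct, 0, 1/Ct, 0],
              vector [(kC1 - 1)/LC, (kC2 - RC)/LC, kC3/LC, 0, 0],
              vector [0, -1, 0, 0, 0],
              vector [(kV1 - 1)/LV, 0, 0, (kV2 - RV)/LV, kV3/LV],
              vector [-1, 0, 0, 0, 0] ]"

text \<open>The full closed-loop matrix as a block operator on real^5^'n
  (the state of node i is x$i :: real^5): block (i,j) is applied to x$j and summed over j.\<close>
definition Fblock ::
  "('n \<Rightarrow> 'n \<Rightarrow> bool) \<Rightarrow> ('n \<Rightarrow> 'n \<Rightarrow> real) \<Rightarrow> ('n \<Rightarrow> real) \<Rightarrow> ('n \<Rightarrow> real)
     \<Rightarrow> ('n \<Rightarrow> real^5^5) \<Rightarrow> 'n \<Rightarrow> 'n \<Rightarrow> real^5^5" where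
  "Fblock E R RL Ct Fl i j =
     (if j = i then Fl i - (1 / (RL i * Ct i) + (\<Sum>k\<in>{k. E i k}. 1 / (R i k * Ct i))) *\<^sub>R E11
      else if E i j then (1 / (R i j * Ct i)) *\<^sub>R E11 else 0)"

definition Fsys ::
  "('n::finite \<Rightarrow> 'n \<Rightarrow> bool) \<Rightarrow> ('n \<Rightarrow> 'n \<Rightarrow> real) \<Rightarrow> ('n \<Rightarrow> real) \<Rightarrow> ('n \<Rightarrow> real)
     \<Rightarrow> ('n \<Rightarrow> real^5^5) \<Rightarrow> real^5^'n \<Rightarrow> real^5^'n" where
  "Fsys E R RL Ct Fl x = (\<chi> i. \<Sum>j\<in>UNIV. Fblock E R RL Ct Fl i j *v (x $ j))"

end

theory Submission
  imports Defs
begin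

(*
  In the shifted gains aC = 1 - kC1, bC = RC - kC2, cC = kC3, aV = 1 - kV1, bV = RV - kV2, cV = kV3
  each microgrid is a linear node driven by the current u its lines inject into the bus. A weighted
  sum of the electric energies and of the integrator states is a storage function whose derivative is
  -v^2/RL - (bC/aC) iC^2 - (bV iV - cV zV)^2/Delta + v u; the gain conditions say precisely that all
  weights are positive (the bound on kV3 is Delta = aV bV - cV LV > 0). The small cross terms
  -e1 LC iC zC - e2 C v iV make this derivative negative definite up to the supply (v - e2 iV) u.
  Summed over the cluster, the supplies through the lines cancel up to the terms D e2^2 iV^2 / 2
  left by Young's inequality, which the negative definite part absorbs once e2 is small. The sum of
  the node functions is thus a quadratic Lyapunov function with negative definite derivative, which
  gives exponential decay.
*)

lemma mult_le_weighted_squares: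
  fixes a b t :: real
  assumes "0 < t"
  shows "a * b \<le> t * a\<^sup>2 + b\<^sup>2 / (4 * t)"
proof -
  have "t * a\<^sup>2 + b\<^sup>2 / (4 * t) - a * b = (2 * t * a - b)\<^sup>2 / (4 * t)"
    using assms by (simp add: field_simps power2_eq_square)
  also have "\<dots> \<ge> 0"
    using assms by simp
  finally show ?thesis by simp
qed

lemma eventually_at_right_0_mult_le:
  fixes T c :: real
  assumes "0 < c"
  shows "\<forall>\<^sub>F e in at_right 0. e * T \<le> c"
proof -
  have "((\<lambda>e. e * T) \<longlongrightarrow> 0) (at_right 0)"
    by (auto intro!: tendsto_eq_intros)
  from order_tendstoD(2)[OF this assms] show ?thesis
    by (rule eventually_mono) simp
qed

lemma quadratic_form_2_lower_bound:
  fixes a b c x y :: real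
  assumes "0 < a" "0 < c" "b\<^sup>2 \<le> a * c"
  shows "(a * c - b\<^sup>2) / (a + c) * (x\<^sup>2 + y\<^sup>2) \<le> a * x\<^sup>2 + 2 * b * x * y + c * y\<^sup>2"
proof -
  define m where "m = (a * c - b\<^sup>2) / (a + c)"
  have m_sum: "m * (a + c) = a * c - b\<^sup>2"
    unfolding m_def using assms by simp
  have "m < a"
    unfolding m_def using assms by (simp add: field_simps power2_eq_square add_pos_nonneg)
  have "(a - m) * (a * x\<^sup>2 + 2 * b * x * y + c * y\<^sup>2 - m * (x\<^sup>2 + y\<^sup>2))
      = ((a - m) * x + b * y)\<^sup>2 + (a * c - m * (a + c) + m\<^sup>2 - b\<^sup>2) * y\<^sup>2"
    by (simp add: power2_eq_square algebra_simps)
  also have "\<dots> = ((a - m) * x + b * y)\<^sup>2 + m\<^sup>2 * y\<^sup>2"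
    unfolding m_sum by simp
  also have "\<dots> \<ge> 0"
    by simp
  finally show ?thesis
    unfolding m_def[symmetric] using \<open>m < a\<close> by (simp add: zero_le_mult_iff)
qed

lemma square_le_mixed_square:
  fixes b c e \<Delta> j y :: real
  assumes "0 < \<Delta>" "0 \<le> e" "e * \<Delta> \<le> 4 * (b\<^sup>2 + 1)"
  shows "e * c\<^sup>2 / (8 * (b\<^sup>2 + 1)) * y\<^sup>2 \<le> (b * j - c * y)\<^sup>2 / \<Delta> + e / 4 * j\<^sup>2"
proof -
  define q where "q = b * j - c * y"
  define B where "B = b\<^sup>2 + 1"
  have "0 < B" "b\<^sup>2 \<le> B"
    unfolding B_def by (simp_all add: add_nonneg_pos)
  have "c\<^sup>2 * y\<^sup>2 = 2 * q\<^sup>2 + 2 * b\<^sup>2 * j\<^sup>2 - (b * j + q)\<^sup>2"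
    unfolding q_def by (simp add: power2_eq_square algebra_simps)
  then have "e / (8 * B) * (c\<^sup>2 * y\<^sup>2) \<le> e / (8 * B) * (2 * q\<^sup>2 + 2 * b\<^sup>2 * j\<^sup>2)"
    using \<open>0 \<le> e\<close> \<open>0 < B\<close> by (intro mult_left_mono) simp_all
  also have "\<dots> = e / (4 * B) * q\<^sup>2 + e / 4 * (b\<^sup>2 / B) * j\<^sup>2"
    using \<open>0 < B\<close> by (simp add: field_simps)
  also have "\<dots> \<le> q\<^sup>2 / \<Delta> + e / 4 * j\<^sup>2"
  proof (rule add_mono)
    have "e / (4 * B) \<le> 1 / \<Delta>"
      using assms \<open>0 < B\<close> unfolding B_def by (simp add: field_simps)
    from mult_right_mono[OF this zero_le_power2]
    show "e / (4 * B) * q\<^sup>2 \<le> q\<^sup>2 / \<Delta>"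
      by simp
    show "e / 4 * (b\<^sup>2 / B) * j\<^sup>2 \<le> e / 4 * j\<^sup>2"
      using \<open>0 \<le> e\<close> \<open>0 < B\<close> \<open>b\<^sup>2 \<le> B\<close> by (intro mult_right_mono mult_left_le) simp_all
  qed
  finally show ?thesis
    unfolding q_def B_def by simp
qed

lemma exhaust_5:
  fixes x :: 5
  shows "x = 1 \<or> x = 2 \<or> x = 3 \<or> x = 4 \<or> x = 5"
proof (induct x)
  case (of_int z)
  then have "z = 0 \<or> z = 1 \<or> z = 2 \<or> z = 3 \<or> z = 4" by fastforce
  then show ?case by auto
qed

lemma forall_5: "(\<forall>i::5. P i) \<longleftrightarrow> P 1 \<and> P 2 \<and> P 3 \<and> P 4 \<and> P 5"
  by (metis exhaust_5)

lemma UNIV_5: "UNIV = {1, 2, 3, 4, 5::5}"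
  using exhaust_5 by auto

lemma sum_5: "sum f (UNIV::5 set) = f 1 + f 2 + f 3 + f 4 + f 5"
  unfolding UNIV_5 by (simp add: ac_simps)

lemma vector_5 [simp]:
  "(vector [x1, x2, x3, x4, x5] :: ('a::zero)^5) $ 1 = x1"
  "(vector [x1, x2, x3, x4, x5] :: ('a::zero)^5) $ 2 = x2"
  "(vector [x1, x2, x3, x4, x5] :: ('a::zero)^5) $ 3 = x3"
  "(vector [x1, x2, x3, x4, x5] :: ('a::zero)^5) $ 4 = x4"
  "(vector [x1, x2, x3, x4, x5] :: ('a::zero)^5) $ 5 = x5"
  unfolding vector_def by simp_all

lemma norm_vec_power2:
  fixes x :: "'a::real_normed_vector^'n"
  shows "(norm x)\<^sup>2 = (\<Sum>i\<in>UNIV. (norm (x $ i))\<^sup>2)"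
  by (simp add: norm_vec_def L2_set_def sum_nonneg)

lemma norm_power2_5:
  fixes w :: "real^5"
  shows "(norm w)\<^sup>2 = (w$1)\<^sup>2 + (w$2)\<^sup>2 + (w$3)\<^sup>2 + (w$4)\<^sup>2 + (w$5)\<^sup>2"
  by (simp add: norm_vec_power2 sum_5)

lemma mult_nth_mult_le_norm_power2:
  fixes w :: "real^'n"
  shows "a * (w $ k * w $ l) \<le> \<bar>a\<bar> * (norm w)\<^sup>2"
proof -
  have "a * (w $ k * w $ l) \<le> \<bar>a * (w $ k * w $ l)\<bar>"
    by (rule abs_ge_self)
  also have "\<dots> = \<bar>a\<bar> * \<bar>w $ k * w $ l\<bar>"
    by (rule abs_mult)
  also have "\<dots> \<le> \<bar>a\<bar> * (norm w)\<^sup>2"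
    unfolding abs_mult power2_eq_square by (intro mult_left_mono mult_mono component_le_norm_cart) simp_all
  finally show ?thesis .
qed

lemma diagonal_form_5_lower_bound:
  fixes c1 c2 c3 c4 c5 :: real
  assumes "0 < c1" "0 < c2" "0 < c3" "0 < c4" "0 < c5"
  shows "\<exists>m>0. \<forall>w::real^5. m * (norm w)\<^sup>2
           \<le> c1 * (w$1)\<^sup>2 + c2 * (w$2)\<^sup>2 + c3 * (w$3)\<^sup>2 + c4 * (w$4)\<^sup>2 + c5 * (w$5)\<^sup>2"
proof (intro exI conjI allI)
  define m where "m = min c1 (min c2 (min c3 (min c4 c5)))"
  show "0 < m"
    unfolding m_def using assms by simp
  show "m * (norm w)\<^sup>2 \<le> c1 * (w$1)\<^sup>2 + c2 * (w$2)\<^sup>2 + c3 * (w$3)\<^sup>2 + c4 * (w$4)\<^sup>2 + c5 * (w$5)\<^sup>2"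
    for w :: "real^5"
    unfolding norm_power2_5 distrib_left m_def
    by (intro add_mono mult_right_mono) auto
qed

lemma has_real_derivative_vec_nth:
  fixes g :: "real \<Rightarrow> real^'n"
  assumes "(g has_vector_derivative g') (at t within T)"
  shows "((\<lambda>s. g s $ k) has_real_derivative g' $ k) (at t within T)"
  unfolding has_real_derivative_iff_has_vector_derivative
  using bounded_linear.has_vector_derivative[OF bounded_linear_vec_nth assms] .

lemma exp_weighted_lyapunov_decreasing:
  fixes f :: "'a::real_normed_vector \<Rightarrow> 'a" and V :: "'a \<Rightarrow> real" and dV :: "'a \<Rightarrow> 'a \<Rightarrow> real"
  assumes decay: "\<And>x. k * V x + dV x (f x) \<le> 0"
    and chain: "\<And>g g' t T. (g has_vector_derivative g') (at t within T) \<Longrightarrow>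
                  ((\<lambda>s. V (g s)) has_real_derivative dV (g t) g') (at t within T)"
    and "is_solution f x" "0 \<le> t"
  shows "exp (k * t) * V (x t) \<le> V (x 0)"
proof -
  define \<phi> where "\<phi> s = exp (k * s) * V (x s)" for s
  have \<phi>_deriv: "(\<phi> has_real_derivative exp (k * s) * (k * V (x s) + dV (x s) (f (x s)))) (at s within {0..})"
    if "0 \<le> s" for s
  proof -
    have "(x has_vector_derivative f (x s)) (at s within {0..})"
      using \<open>is_solution f x\<close> that unfolding is_solution_def by blast
    from chain[OF this] show ?thesis
      unfolding \<phi>_def by (auto intro!: derivative_eq_intros simp: algebra_simps)
  qed
  have "\<phi> t \<le> \<phi> 0"
  proof (rule DERIV_nonpos_imp_decreasing_open[OF \<open>0 \<le> t\<close>])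
    fix s assume s: "0 < s" "s < t"
    have "(\<phi> has_real_derivative exp (k * s) * (k * V (x s) + dV (x s) (f (x s)))) (at s within {0<..})"
      using \<phi>_deriv[of s] s by (auto intro: DERIV_subset)
    then have "(\<phi> has_real_derivative exp (k * s) * (k * V (x s) + dV (x s) (f (x s)))) (at s)"
      using s at_within_open[of s "{0<..}"] by simp
    moreover have "exp (k * s) * (k * V (x s) + dV (x s) (f (x s))) \<le> 0"
      using decay[of "x s"] by (simp add: mult_nonneg_nonpos)
    ultimately show "\<exists>y. (\<phi> has_real_derivative y) (at s) \<and> y \<le> 0"
      by blast
  next
    show "continuous_on {0..t} \<phi>"
      unfolding continuous_on_eq_continuous_within
      using \<phi>_deriv DERIV_continuous continuous_within_subset
      by (metis atLeastAtMost_iff atLeast_iff subsetI)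
  qed
  then show ?thesis
    unfolding \<phi>_def by simp
qed

lemma quadratic_lyapunov_exponential_bound:
  fixes f :: "'a::real_normed_vector \<Rightarrow> 'a" and V :: "'a \<Rightarrow> real" and dV :: "'a \<Rightarrow> 'a \<Rightarrow> real"
  assumes "0 < m" "0 < M" "0 \<le> w"
    and lower: "\<And>x. m * (norm x)\<^sup>2 \<le> V x" and upper: "\<And>x. V x \<le> M * (norm x)\<^sup>2"
    and decrease: "\<And>x. dV x (f x) \<le> - w * (norm x)\<^sup>2"
    and chain: "\<And>g g' t T. (g has_vector_derivative g') (at t within T) \<Longrightarrow>
                  ((\<lambda>s. V (g s)) has_real_derivative dV (g t) g') (at t within T)"
    and "is_solution f x" "0 \<le> t"
  shows "norm (x t) \<le> sqrt (M / m) * exp (- (w / (2 * M)) * t) * norm (x 0)"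
proof -
  define k where "k = w / M"
  have "k * V y + dV y (f y) \<le> 0" for y
  proof -
    have "k * V y \<le> k * (M * (norm y)\<^sup>2)"
      using upper assms unfolding k_def by (intro mult_left_mono) simp_all
    also have "\<dots> = w * (norm y)\<^sup>2"
      unfolding k_def using \<open>0 < M\<close> by simp
    finally show ?thesis
      using decrease[of y] by simp
  qed
  from exp_weighted_lyapunov_decreasing[of k V dV f, OF this chain \<open>is_solution f x\<close> \<open>0 \<le> t\<close>]
  have "V (x t) \<le> exp (- k * t) * V (x 0)"
    by (simp add: exp_minus field_simps)
  also have "\<dots> \<le> exp (- k * t) * (M * (norm (x 0))\<^sup>2)"
    using upper by (simp add: mult_left_mono)
  finally have "(norm (x t))\<^sup>2 \<le> M / m * exp (- k * t) * (norm (x 0))\<^sup>2"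
    using lower[of "x t"] \<open>0 < m\<close> by (simp add: field_simps)
  also have "\<dots> = (sqrt (M / m) * exp (- (w / (2 * M)) * t) * norm (x 0))\<^sup>2"
    using assms unfolding k_def by (simp add: power_mult_distrib flip: exp_double)
  finally show ?thesis
    by (rule power2_le_imp_le) (use assms in simp)
qed

lemma quadratic_lyapunov_imp_asymptotically_stable:
  fixes f :: "'a::real_normed_vector \<Rightarrow> 'a" and V :: "'a \<Rightarrow> real" and dV :: "'a \<Rightarrow> 'a \<Rightarrow> real"
  assumes "f 0 = 0" "0 < m" "0 < M" "0 < w"
    and lower: "\<And>x. m * (norm x)\<^sup>2 \<le> V x" and upper: "\<And>x. V x \<le> M * (norm x)\<^sup>2"
    and decrease: "\<And>x. dV x (f x) \<le> - w * (norm x)\<^sup>2"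
    and chain: "\<And>g g' t T. (g has_vector_derivative g') (at t within T) \<Longrightarrow>
                  ((\<lambda>s. V (g s)) has_real_derivative dV (g t) g') (at t within T)"
  shows "asymptotically_stable_origin f"
proof -
  define K where "K = sqrt (M / m)"
  define k where "k = w / (2 * M)"
  have "0 < K" "0 < k"
    unfolding K_def k_def using assms by simp_all
  have bound: "norm (x t) \<le> K * exp (- k * t) * norm (x 0)" if "is_solution f x" "0 \<le> t" for x t
    unfolding K_def k_def
    using quadratic_lyapunov_exponential_bound[where m = m and M = M and w = w and V = V and dV = dV and f = f, OF _ _ _ lower upper decrease chain that] assms
    by simp
  have stable: "\<forall>t\<ge>0. norm (x t) < \<epsilon>" if "is_solution f x" "norm (x 0) < \<epsilon> / K" for x \<epsilon>
  proof (intro allI impI)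
    fix t :: real assume "0 \<le> t"
    have "norm (x t) \<le> K * exp (- k * t) * norm (x 0)"
      using bound that(1) \<open>0 \<le> t\<close> by blast
    also have "\<dots> \<le> K * norm (x 0)"
      using \<open>0 < K\<close> \<open>0 < k\<close> \<open>0 \<le> t\<close> by (simp add: mult_left_le_one_le)
    also have "\<dots> < \<epsilon>"
      using that(2) \<open>0 < K\<close> by (simp add: field_simps)
    finally show "norm (x t) < \<epsilon>" .
  qed
  have attractive: "(x \<longlongrightarrow> 0) at_top" if "is_solution f x" for x
  proof (rule tendsto_0_le)
    show "((\<lambda>t. K * exp (- k * t) * norm (x 0)) \<longlongrightarrow> 0) at_top"
    proof -
      have "filterlim (\<lambda>t. - k * t) at_bot at_top"
        using \<open>0 < k\<close> by (intro filterlim_tendsto_neg_mult_at_bot[OF tendsto_const] filterlim_ident) simp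
      from filterlim_compose[OF exp_at_bot this] show ?thesis
        by (intro tendsto_mult_right_zero tendsto_mult_left_zero)
    qed
    show "\<forall>\<^sub>F t in at_top. norm (x t) \<le> norm (K * exp (- k * t) * norm (x 0)) * 1"
      using eventually_ge_at_top[of 0] by eventually_elim (use bound[OF that] in \<open>auto intro: order_trans[OF _ abs_ge_self]\<close>)
  qed
  show ?thesis
    unfolding asymptotically_stable_origin_def
  proof (intro conjI allI impI)
    show "\<exists>\<delta>>0. \<forall>x. is_solution f x \<and> norm (x 0) < \<delta> \<longrightarrow> (\<forall>t\<ge>0. norm (x t) < \<epsilon>)"
      if "0 < \<epsilon>" for \<epsilon>
      using stable that \<open>0 < K\<close> by (intro exI[of _ "\<epsilon> / K"]) auto
    show "\<exists>\<delta>>0. \<forall>x. is_solution f x \<and> norm (x 0) < \<delta> \<longrightarrow> (x \<longlongrightarrow> 0) at_top"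
      using attractive by (intro exI[of _ 1]) auto
  qed (rule \<open>f 0 = 0\<close>)
qed

lemma has_real_derivative_sum_nth:
  fixes g :: "real \<Rightarrow> 'a::real_normed_vector^'n::finite"
  assumes chain: "\<And>i h h'. (h has_vector_derivative h') (at t within T) \<Longrightarrow>
                    ((\<lambda>s. S i (h s)) has_real_derivative dS i (h t) h') (at t within T)"
    and "(g has_vector_derivative g') (at t within T)"
  shows "((\<lambda>s. \<Sum>i\<in>UNIV. S i (g s $ i)) has_real_derivative (\<Sum>i\<in>UNIV. dS i (g t $ i) (g' $ i)))
           (at t within T)"
proof -
  have "((\<lambda>s. g s $ i) has_vector_derivative g' $ i) (at t within T)" for i
    by (rule bounded_linear.has_vector_derivative[OF bounded_linear_vec_nth assms(2)])
  then show ?thesis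
    unfolding has_real_derivative_iff_has_vector_derivative
    by (intro has_vector_derivative_sum chain[unfolded has_real_derivative_iff_has_vector_derivative])
qed

lemma separable_lyapunov_imp_asymptotically_stable:
  fixes f :: "'a::real_normed_vector^'n::finite \<Rightarrow> 'a^'n" and r :: "'n \<Rightarrow> 'p \<Rightarrow> 'a^'n \<Rightarrow> real"
  assumes "f 0 = 0"
    and nodes: "\<And>i. \<exists>p S dS. (\<exists>m>0. \<forall>w. m * (norm w)\<^sup>2 \<le> S w) \<and> (\<exists>M. \<forall>w. S w \<le> M * (norm w)\<^sup>2) \<and>
      (\<forall>g g' t T. (g has_vector_derivative g') (at t within T) \<longrightarrow>
         ((\<lambda>s. S (g s)) has_real_derivative dS (g t) g') (at t within T)) \<and>
      (\<exists>\<omega>>0. \<forall>x. dS (x $ i) (f x $ i) \<le> - \<omega> * (norm (x $ i))\<^sup>2 + r i p x)"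
    and coupling: "\<And>p x. (\<Sum>i\<in>UNIV. r i (p i) x) \<le> 0"
  shows "asymptotically_stable_origin f"
proof -
  obtain p :: "'n \<Rightarrow> 'p" and S dS m M \<omega> where m: "\<And>i. 0 < m i" "\<And>i w. m i * (norm w)\<^sup>2 \<le> S i w"
    and M: "\<And>i w. S i w \<le> M i * (norm w)\<^sup>2"
    and \<omega>: "\<And>i. 0 < \<omega> i" "\<And>i x. dS i (x $ i) (f x $ i) \<le> - \<omega> i * (norm (x $ i))\<^sup>2 + r i (p i) x"
    and chain: "\<And>i g g' t T. (g has_vector_derivative g') (at t within T) \<Longrightarrow>
                  ((\<lambda>s. S i (g s)) has_real_derivative dS i (g t) g') (at t within T)"
    using nodes by metis
  define m0 where "m0 = Min (range m)"
  define M0 where "M0 = max 1 (Max (range M))"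
  define \<omega>0 where "\<omega>0 = Min (range \<omega>)"
  have "0 < m0" "0 < M0" "0 < \<omega>0"
    unfolding m0_def M0_def \<omega>0_def using m \<omega> by simp_all
  show ?thesis
  proof (rule quadratic_lyapunov_imp_asymptotically_stable
      [where V = "\<lambda>x. \<Sum>i\<in>UNIV. S i (x $ i)" and dV = "\<lambda>x h. \<Sum>i\<in>UNIV. dS i (x $ i) (h $ i)"])
    fix x :: "'a^'n"
    have "m0 * (norm x)\<^sup>2 = (\<Sum>i\<in>UNIV. m0 * (norm (x $ i))\<^sup>2)"
      by (simp add: norm_vec_power2 sum_distrib_left)
    also have "\<dots> \<le> (\<Sum>i\<in>UNIV. S i (x $ i))"
      unfolding m0_def by (intro sum_mono order_trans[OF mult_right_mono m(2)]) auto
    finally show "m0 * (norm x)\<^sup>2 \<le> (\<Sum>i\<in>UNIV. S i (x $ i))" .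
    have "(\<Sum>i\<in>UNIV. S i (x $ i)) \<le> (\<Sum>i\<in>UNIV. M0 * (norm (x $ i))\<^sup>2)"
      unfolding M0_def by (intro sum_mono order_trans[OF M mult_right_mono]) (auto intro: max.coboundedI2)
    also have "\<dots> = M0 * (norm x)\<^sup>2"
      by (simp add: norm_vec_power2 sum_distrib_left)
    finally show "(\<Sum>i\<in>UNIV. S i (x $ i)) \<le> M0 * (norm x)\<^sup>2" .
    have "(\<Sum>i\<in>UNIV. dS i (x $ i) (f x $ i)) \<le> (\<Sum>i\<in>UNIV. - \<omega> i * (norm (x $ i))\<^sup>2) + (\<Sum>i\<in>UNIV. r i (p i) x)"
      unfolding sum.distrib[symmetric] by (intro sum_mono \<omega>(2))
    also have "\<dots> \<le> (\<Sum>i\<in>UNIV. - \<omega> i * (norm (x $ i))\<^sup>2)"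
      using coupling[of p x] by simp
    also have "\<dots> \<le> (\<Sum>i\<in>UNIV. - \<omega>0 * (norm (x $ i))\<^sup>2)"
      unfolding \<omega>0_def by (intro sum_mono mult_right_mono) auto
    also have "\<dots> = - \<omega>0 * (norm x)\<^sup>2"
      by (simp add: norm_vec_power2 sum_distrib_left)
    finally show "(\<Sum>i\<in>UNIV. dS i (x $ i) (f x $ i)) \<le> - \<omega>0 * (norm x)\<^sup>2" .
  next
    fix g :: "real \<Rightarrow> 'a^'n" and g' t T
    assume "(g has_vector_derivative g') (at t within T)"
    then show "((\<lambda>s. \<Sum>i\<in>UNIV. S i (g s $ i)) has_real_derivative (\<Sum>i\<in>UNIV. dS i (g t $ i) (g' $ i)))
        (at t within T)"
      by (intro has_real_derivative_sum_nth chain)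
  qed (use \<open>f 0 = 0\<close> \<open>0 < m0\<close> \<open>0 < M0\<close> \<open>0 < \<omega>0\<close> in auto)
qed

lemma laplacian_coupling_le:
  fixes E :: "'n::finite \<Rightarrow> 'n \<Rightarrow> bool" and R :: "'n \<Rightarrow> 'n \<Rightarrow> real" and v e y :: "'n \<Rightarrow> real"
  assumes E_sym: "\<And>i j. E i j \<Longrightarrow> E j i"
    and R_sym: "\<And>i j. E i j \<Longrightarrow> R i j = R j i"
    and R_pos: "\<And>i j. E i j \<Longrightarrow> 0 < R i j"
  shows "(\<Sum>i\<in>UNIV. (v i - e i * y i) * (\<Sum>j\<in>{j. E i j}. (v j - v i) / R i j))
     \<le> (\<Sum>i\<in>UNIV. (\<Sum>j\<in>{j. E i j}. 1 / R i j) * (e i)\<^sup>2 / 2 * (y i)\<^sup>2)"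
proof -
  define g where "g i j = ((v j)\<^sup>2 - (v i)\<^sup>2) / (2 * R i j)" for i j
  have edge: "(v i - e i * y i) * ((v j - v i) / R i j) \<le> g i j + (e i)\<^sup>2 / 2 * (y i)\<^sup>2 * (1 / R i j)"
    if "E i j" for i j
  proof -
    have "((v j)\<^sup>2 - (v i)\<^sup>2) / 2 + (e i)\<^sup>2 / 2 * (y i)\<^sup>2 - (v i - e i * y i) * (v j - v i)
        = (v j - v i + e i * y i)\<^sup>2 / 2"
      by (simp add: power2_eq_square field_simps)
    then have "(v i - e i * y i) * (v j - v i) \<le> ((v j)\<^sup>2 - (v i)\<^sup>2) / 2 + (e i)\<^sup>2 / 2 * (y i)\<^sup>2"
      using zero_le_power2[of "v j - v i + e i * y i"] by linarith
    from divide_right_mono[OF this, of "R i j"] R_pos[OF that] show ?thesis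
      unfolding g_def by (simp add: add_divide_distrib mult.commute)
  qed
  have "(\<Sum>i\<in>UNIV. \<Sum>j\<in>{j. E i j}. g i j) = (\<Sum>i\<in>UNIV. \<Sum>j\<in>UNIV. if E i j then g i j else 0)"
    by (simp add: sum.If_cases)
  also have "\<dots> = (\<Sum>j\<in>UNIV. \<Sum>i\<in>UNIV. if E i j then g i j else 0)"
    by (rule sum.swap)
  also have "\<dots> = (\<Sum>j\<in>UNIV. \<Sum>i\<in>UNIV. - (if E j i then g j i else 0))"
    using E_sym R_sym unfolding g_def by (intro sum.cong refl) (auto simp: minus_divide_left)
  also have "\<dots> = - (\<Sum>j\<in>UNIV. \<Sum>i\<in>UNIV. if E j i then g j i else 0)"
    by (simp add: sum_negf)
  finally have cancel: "(\<Sum>i\<in>UNIV. \<Sum>j\<in>{j. E i j}. g i j) = 0"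
    by (simp add: sum.If_cases)
  have "(\<Sum>i\<in>UNIV. (v i - e i * y i) * (\<Sum>j\<in>{j. E i j}. (v j - v i) / R i j))
      \<le> (\<Sum>i\<in>UNIV. \<Sum>j\<in>{j. E i j}. g i j + (e i)\<^sup>2 / 2 * (y i)\<^sup>2 * (1 / R i j))"
    unfolding sum_distrib_left by (intro sum_mono edge) simp
  also have "\<dots> = (\<Sum>i\<in>UNIV. (\<Sum>j\<in>{j. E i j}. 1 / R i j) * (e i)\<^sup>2 / 2 * (y i)\<^sup>2)"
    using cancel by (simp add: sum.distrib sum_distrib_left sum_divide_distrib mult.commute)
  finally show ?thesis .
qed

lemma E11_mult: "E11 *v w = w $ 1 *\<^sub>R axis 1 1"
  by (simp add: vec_eq_iff E11_def matrix_vector_mult_def axis_def sum_5)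

lemma Fsys_nth:
  assumes "\<not> E i i"
  shows "Fsys E R RL Ct Fl x $ i = Fl i *v x $ i
           + (((\<Sum>j\<in>{j. E i j}. (x$j$1 - x$i$1) / R i j) - x$i$1 / RL i) / Ct i) *\<^sub>R axis 1 1"
proof -
  define c where "c = 1 / (RL i * Ct i) + (\<Sum>k\<in>{k. E i k}. 1 / (R i k * Ct i))"
  have block: "Fblock E R RL Ct Fl i j *v w =
      (if j = i then Fl i *v w - (c * w$1) *\<^sub>R axis 1 1
       else if E i j then (w$1 / (R i j * Ct i)) *\<^sub>R axis 1 1 else 0)" for j w
    unfolding Fblock_def c_def
    by (simp add: matrix_vector_mult_diff_rdistrib E11_mult flip: scaleR_matrix_vector_assoc)
  have "Fsys E R RL Ct Fl x $ i = (\<Sum>j\<in>UNIV. Fblock E R RL Ct Fl i j *v x $ j)"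
    unfolding Fsys_def by simp
  also have "\<dots> = Fl i *v x $ i - (c * x$i$1) *\<^sub>R axis 1 1
      + (\<Sum>j\<in>{j. E i j}. (x$j$1 / (R i j * Ct i)) *\<^sub>R axis 1 1)"
  proof -
    have "{j \<in> UNIV - {i}. E i j} = {j. E i j}"
      using assms by auto
    moreover have "(\<Sum>j\<in>UNIV - {i}. Fblock E R RL Ct Fl i j *v x $ j)
        = (\<Sum>j\<in>UNIV - {i}. if E i j then (x$j$1 / (R i j * Ct i)) *\<^sub>R axis 1 1 else 0)"
      by (intro sum.cong) (auto simp: block)
    ultimately show ?thesis
      by (simp add: sum.remove[of UNIV i] block flip: sum.inter_filter)
  qed
  also have "\<dots> = Fl i *v x $ i + ((\<Sum>j\<in>{j. E i j}. x$j$1 / (R i j * Ct i)) - c * x$i$1) *\<^sub>R axis 1 1"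
    by (simp add: scaleR_sum_left scaleR_left_diff_distrib)
  also have "(\<Sum>j\<in>{j. E i j}. x$j$1 / (R i j * Ct i)) - c * x$i$1
      = ((\<Sum>j\<in>{j. E i j}. (x$j$1 - x$i$1) / R i j) - x$i$1 / RL i) / Ct i"
    unfolding c_def
    by (simp add: sum_subtractf diff_divide_distrib add_divide_distrib sum_divide_distrib sum_distrib_left algebra_simps)
  finally show ?thesis .
qed

(* One node in the shifted gains: the state w = (v, iC, zC, iV, zV) is bus voltage, current-controlled
  filter current and its integrator, voltage-controlled filter current and its integrator; u is the
  current injected by the lines. *)
locale dc_microgrid_node =
  fixes C LC LV RL aC bC cC aV bV cV :: real
  assumes pos: "0 < C" "0 < LC" "0 < LV" "0 < RL" "0 < aC" "0 < bC" "0 < cC" "0 < aV" "0 < bV" "0 < cV"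
    and voltage_loop_gain: "cV * LV < aV * bV"
begin

definition \<Delta> :: real where
  "\<Delta> = aV * bV - cV * LV"

lemma \<Delta>_pos: "0 < \<Delta>"
  unfolding \<Delta>_def using voltage_loop_gain by simp

definition node_field :: "real \<Rightarrow> real^5 \<Rightarrow> real^5" where
  "node_field u w = vector [(w$2 + w$4 - w$1 / RL + u) / C, (- aC * w$1 - bC * w$2 + cC * w$3) / LC,
     - w$2, (- aV * w$1 - bV * w$4 + cV * w$5) / LV, - w$1]"

definition lyapunov :: "real \<Rightarrow> real \<Rightarrow> real^5 \<Rightarrow> real" where
  "lyapunov e1 e2 w = C * (w$1)\<^sup>2 / 2 + (LC * (w$2)\<^sup>2 + cC * (w$3)\<^sup>2) / (2 * aC)
     + (bV * LV * (w$4)\<^sup>2 / 2 - cV * LV * w$4 * w$5 + cV * aV * (w$5)\<^sup>2 / 2) / \<Delta>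
     - e1 * LC * w$2 * w$3 - e2 * C * w$1 * w$4"

definition lyapunov_deriv :: "real \<Rightarrow> real \<Rightarrow> real^5 \<Rightarrow> real^5 \<Rightarrow> real" where
  "lyapunov_deriv e1 e2 w h = C * w$1 * h$1 + (LC * w$2 * h$2 + cC * w$3 * h$3) / aC
     + (bV * LV * w$4 * h$4 - cV * LV * (h$4 * w$5 + w$4 * h$5) + cV * aV * w$5 * h$5) / \<Delta>
     - e1 * LC * (h$2 * w$3 + w$2 * h$3) - e2 * C * (h$1 * w$4 + w$1 * h$4)"

lemma lyapunov_has_real_derivative:
  assumes "(g has_vector_derivative g') (at t within T)"
  shows "((\<lambda>s. lyapunov e1 e2 (g s)) has_real_derivative lyapunov_deriv e1 e2 (g t) g') (at t within T)"
  unfolding lyapunov_def lyapunov_deriv_def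
  using pos \<Delta>_pos
  by (auto intro!: derivative_eq_intros has_real_derivative_vec_nth[OF assms] simp: field_simps power2_eq_square)

lemma lyapunov_deriv_node_field:
  "lyapunov_deriv e1 e2 w (node_field u w) =
     - ((w$1)\<^sup>2 / RL) - bC / aC * (w$2)\<^sup>2 - (bV * w$4 - cV * w$5)\<^sup>2 / \<Delta>
     + e1 * (aC * w$1 * w$3 + bC * w$2 * w$3 - cC * (w$3)\<^sup>2 + LC * (w$2)\<^sup>2)
     + e2 * (- w$2 * w$4 - (w$4)\<^sup>2 + w$1 * w$4 / RL + C * aV / LV * (w$1)\<^sup>2
             + C * bV / LV * w$1 * w$4 - C * cV / LV * w$1 * w$5)
     + (w$1 - e2 * w$4) * u"
  unfolding lyapunov_deriv_def node_field_def
  using pos \<Delta>_pos unfolding \<Delta>_def by (simp add: field_simps power2_eq_square)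


lemma current_loop_estimate:
  fixes v i z :: real
  assumes "0 \<le> e1" "e1 * LC \<le> bC / (8 * aC)" "e1 * (4 * RL * aC\<^sup>2 + 4 * aC * bC) \<le> cC"
  shows "e1 * (aC * v * z + bC * i * z - cC * z\<^sup>2 + LC * i\<^sup>2)
           \<le> v\<^sup>2 / RL / 8 + bC / aC * i\<^sup>2 / 4 - e1 * cC * z\<^sup>2 / 2"
proof -
  have vz: "v * (e1 * aC * z) \<le> v\<^sup>2 / (8 * RL) + 2 * RL * e1\<^sup>2 * aC\<^sup>2 * z\<^sup>2"
    using mult_le_weighted_squares[of "1 / (8 * RL)" v "e1 * aC * z"] pos
    by (simp add: field_simps power2_eq_square)
  have iz: "i * (e1 * bC * z) \<le> bC / (8 * aC) * i\<^sup>2 + 2 * e1\<^sup>2 * aC * bC * z\<^sup>2"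
    using mult_le_weighted_squares[of "bC / (8 * aC)" i "e1 * bC * z"] pos
    by (simp add: field_simps power2_eq_square)
  have ii: "e1 * LC * i\<^sup>2 \<le> bC / (8 * aC) * i\<^sup>2"
    using assms(2) by (rule mult_right_mono) simp
  have "2 * RL * e1\<^sup>2 * aC\<^sup>2 + 2 * e1\<^sup>2 * aC * bC = e1 / 2 * (e1 * (4 * RL * aC\<^sup>2 + 4 * aC * bC))"
    by (simp add: power2_eq_square algebra_simps)
  also have "\<dots> \<le> e1 / 2 * cC"
    using assms by (intro mult_left_mono) simp_all
  finally have zz: "(2 * RL * e1\<^sup>2 * aC\<^sup>2 + 2 * e1\<^sup>2 * aC * bC) * z\<^sup>2 \<le> e1 / 2 * cC * z\<^sup>2"
    by (rule mult_right_mono) simp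
  show ?thesis
    using vz iz ii zz by (simp add: algebra_simps)
qed

lemma voltage_loop_cross_terms:
  fixes v i j y :: real
  assumes "0 \<le> e2" "e2 * (8 * RL * (C * aV / LV)) \<le> 1"
  shows "e2 * (- i * j + v * j / RL + C * aV / LV * v\<^sup>2 + C * bV / LV * v * j - C * cV / LV * v * y)
         \<le> v\<^sup>2 / RL / 2 + bC / aC * i\<^sup>2 / 8
           + (2 * e2\<^sup>2 * aC / bC + 2 * e2\<^sup>2 / RL + 2 * RL * e2\<^sup>2 * (C * bV / LV)\<^sup>2) * j\<^sup>2
           + 2 * RL * e2\<^sup>2 * (C * cV / LV)\<^sup>2 * y\<^sup>2"
proof -
  have ij: "i * (- e2 * j) \<le> bC / (8 * aC) * i\<^sup>2 + 2 * e2\<^sup>2 * aC / bC * j\<^sup>2"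
    using mult_le_weighted_squares[of "bC / (8 * aC)" i "- e2 * j"] pos
    by (simp add: field_simps power2_eq_square)
  have vj: "v * (e2 * j / RL) \<le> v\<^sup>2 / (8 * RL) + 2 * e2\<^sup>2 / RL * j\<^sup>2"
    using mult_le_weighted_squares[of "1 / (8 * RL)" v "e2 * j / RL"] pos
    by (simp add: field_simps power2_eq_square)
  have vv: "e2 * (C * aV / LV) * v\<^sup>2 \<le> v\<^sup>2 / (8 * RL)"
  proof -
    have "e2 * (C * aV / LV) \<le> 1 / (8 * RL)"
      using assms(2) pos by (simp add: field_simps)
    from mult_right_mono[OF this zero_le_power2[of v]] show ?thesis
      by simp
  qed
  have vj': "v * (e2 * (C * bV / LV) * j) \<le> v\<^sup>2 / (8 * RL) + 2 * RL * e2\<^sup>2 * (C * bV / LV)\<^sup>2 * j\<^sup>2"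
    using mult_le_weighted_squares[of "1 / (8 * RL)" v "e2 * (C * bV / LV) * j"] pos
    by (simp add: field_simps power2_eq_square)
  have vy: "v * (- e2 * (C * cV / LV) * y) \<le> v\<^sup>2 / (8 * RL) + 2 * RL * e2\<^sup>2 * (C * cV / LV)\<^sup>2 * y\<^sup>2"
    using mult_le_weighted_squares[of "1 / (8 * RL)" v "- e2 * (C * cV / LV) * y"] pos
    by (simp add: field_simps power2_eq_square)
  show ?thesis
    using ij vj vv vj' vy by (simp add: algebra_simps)
qed

lemma voltage_loop_estimate:
  fixes v i j y :: real
  assumes "0 \<le> e2"
    and "e2 * (4 * aC / bC + 4 / RL + 4 * RL * (C * bV / LV)\<^sup>2 + D) \<le> 1"
    and "e2 * (8 * RL * (C * aV / LV)) \<le> 1"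
    and "e2 * \<Delta> \<le> 4 * (bV\<^sup>2 + 1)"
    and "e2 * (32 * RL * (C * cV / LV)\<^sup>2 * (bV\<^sup>2 + 1)) \<le> cV\<^sup>2"
  shows "e2 * (- i * j - j\<^sup>2 + v * j / RL + C * aV / LV * v\<^sup>2 + C * bV / LV * v * j - C * cV / LV * v * y)
           + D * e2\<^sup>2 / 2 * j\<^sup>2 - (bV * j - cV * y)\<^sup>2 / \<Delta>
         \<le> v\<^sup>2 / RL / 2 + bC / aC * i\<^sup>2 / 8 - e2 * j\<^sup>2 / 4 - e2 * cV\<^sup>2 / (bV\<^sup>2 + 1) * y\<^sup>2 / 16"
proof -
  define B where "B = bV\<^sup>2 + 1"
  have "0 < B"
    unfolding B_def by (intro add_nonneg_pos) simp_all
  have "2 * e2\<^sup>2 * aC / bC + 2 * e2\<^sup>2 / RL + 2 * RL * e2\<^sup>2 * (C * bV / LV)\<^sup>2 + D * e2\<^sup>2 / 2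
      = e2 / 2 * (e2 * (4 * aC / bC + 4 / RL + 4 * RL * (C * bV / LV)\<^sup>2 + D))"
    by (simp add: power2_eq_square algebra_simps)
  also have "\<dots> \<le> e2 / 2"
    using assms(1,2) by (simp add: mult_left_le)
  finally have jj: "(2 * e2\<^sup>2 * aC / bC + 2 * e2\<^sup>2 / RL + 2 * RL * e2\<^sup>2 * (C * bV / LV)\<^sup>2 + D * e2\<^sup>2 / 2) * j\<^sup>2
      \<le> e2 / 2 * j\<^sup>2"
    by (rule mult_right_mono) simp
  have "2 * RL * e2\<^sup>2 * (C * cV / LV)\<^sup>2 = e2 / (16 * B) * (e2 * (32 * RL * (C * cV / LV)\<^sup>2 * B))"
    using \<open>0 < B\<close> by (simp add: field_simps power2_eq_square)
  also have "\<dots> \<le> e2 / (16 * B) * cV\<^sup>2"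
    using assms(1,5) \<open>0 < B\<close> unfolding B_def by (intro mult_left_mono) simp_all
  also have "\<dots> = e2 * cV\<^sup>2 / (16 * B)"
    by simp
  finally have yy: "2 * RL * e2\<^sup>2 * (C * cV / LV)\<^sup>2 * y\<^sup>2 \<le> e2 * cV\<^sup>2 / (16 * B) * y\<^sup>2"
    by (rule mult_right_mono) simp
  have integrator: "e2 * cV\<^sup>2 / (8 * B) * y\<^sup>2 \<le> (bV * j - cV * y)\<^sup>2 / \<Delta> + e2 / 4 * j\<^sup>2"
    unfolding B_def by (rule square_le_mixed_square[OF \<Delta>_pos assms(1,4)])
  show ?thesis
    using voltage_loop_cross_terms[OF assms(1,3), of i j v y] jj yy integrator
    unfolding B_def[symmetric] by (simp add: algebra_simps)
qed

lemma lyapunov_energy_coercive: "\<exists>m>0. \<forall>w. m * (norm w)\<^sup>2 \<le> lyapunov 0 0 w"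
proof -
  define a b c where "a = bV * LV / (2 * \<Delta>)" and "b = - (cV * LV) / (2 * \<Delta>)" and "c = cV * aV / (2 * \<Delta>)"
  have "0 < a" "0 < c"
    unfolding a_def c_def using pos \<Delta>_pos by simp_all
  have "a * c - b\<^sup>2 = cV * LV * (aV * bV - cV * LV) / (4 * \<Delta>\<^sup>2)"
    unfolding a_def b_def c_def using \<Delta>_pos by (simp add: field_simps power2_eq_square)
  also have "\<dots> = cV * LV / (4 * \<Delta>)"
    using \<Delta>_pos by (simp add: power2_eq_square flip: \<Delta>_def)
  finally have "0 < a * c - b\<^sup>2"
    using pos \<Delta>_pos by simp
  define mV where "mV = (a * c - b\<^sup>2) / (a + c)"
  have "0 < mV"
    unfolding mV_def using \<open>0 < a\<close> \<open>0 < c\<close> \<open>0 < a * c - b\<^sup>2\<close> by simp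
  obtain m where "0 < m" and m: "\<And>w::real^5. m * (norm w)\<^sup>2
      \<le> C / 2 * (w$1)\<^sup>2 + LC / (2 * aC) * (w$2)\<^sup>2 + cC / (2 * aC) * (w$3)\<^sup>2 + mV * (w$4)\<^sup>2 + mV * (w$5)\<^sup>2"
    using diagonal_form_5_lower_bound[of "C / 2" "LC / (2 * aC)" "cC / (2 * aC)" mV mV] pos \<open>0 < mV\<close> by auto
  have "m * (norm w)\<^sup>2 \<le> lyapunov 0 0 w" for w
  proof -
    have "mV * ((w$4)\<^sup>2 + (w$5)\<^sup>2) \<le> a * (w$4)\<^sup>2 + 2 * b * w$4 * w$5 + c * (w$5)\<^sup>2"
      unfolding mV_def using quadratic_form_2_lower_bound \<open>0 < a\<close> \<open>0 < c\<close> \<open>0 < a * c - b\<^sup>2\<close> by simp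
    moreover have "lyapunov 0 0 w = C / 2 * (w$1)\<^sup>2 + LC / (2 * aC) * (w$2)\<^sup>2 + cC / (2 * aC) * (w$3)\<^sup>2
        + (a * (w$4)\<^sup>2 + 2 * b * w$4 * w$5 + c * (w$5)\<^sup>2)"
      unfolding lyapunov_def a_def b_def c_def using pos \<Delta>_pos by (simp add: field_simps)
    ultimately show ?thesis
      using m[of w] by (simp add: distrib_left)
  qed
  with \<open>0 < m\<close> show ?thesis by blast
qed

lemma lyapunov_upper_bound: "\<exists>M. \<forall>w. lyapunov e1 e2 w \<le> M * (norm w)\<^sup>2"
proof (intro exI allI)
  fix w :: "real^5"
  have "lyapunov e1 e2 w = C / 2 * (w$1 * w$1) + LC / (2 * aC) * (w$2 * w$2) + cC / (2 * aC) * (w$3 * w$3)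
      + bV * LV / (2 * \<Delta>) * (w$4 * w$4) + (- cV * LV / \<Delta>) * (w$4 * w$5) + cV * aV / (2 * \<Delta>) * (w$5 * w$5)
      + (- e1 * LC) * (w$2 * w$3) + (- e2 * C) * (w$1 * w$4)"
    unfolding lyapunov_def using pos \<Delta>_pos by (simp add: field_simps power2_eq_square)
  also have "\<dots> \<le> (\<bar>C / 2\<bar> + \<bar>LC / (2 * aC)\<bar> + \<bar>cC / (2 * aC)\<bar> + \<bar>bV * LV / (2 * \<Delta>)\<bar> + \<bar>- cV * LV / \<Delta>\<bar>
      + \<bar>cV * aV / (2 * \<Delta>)\<bar> + \<bar>- e1 * LC\<bar> + \<bar>- e2 * C\<bar>) * (norm w)\<^sup>2"
    unfolding distrib_right by (intro add_mono mult_nth_mult_le_norm_power2)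
  finally show "lyapunov e1 e2 w \<le> \<dots>" .
qed

lemma lyapunov_lower_bound:
  assumes m: "\<And>w. m * (norm w)\<^sup>2 \<le> lyapunov 0 0 w" and small: "\<bar>e1\<bar> * LC + \<bar>e2\<bar> * C \<le> m / 2"
  shows "m / 2 * (norm w)\<^sup>2 \<le> lyapunov e1 e2 w"
proof -
  have "lyapunov e1 e2 w = lyapunov 0 0 w - e1 * LC * (w$2 * w$3) - e2 * C * (w$1 * w$4)"
    unfolding lyapunov_def by (simp add: algebra_simps)
  moreover have "e1 * LC * (w$2 * w$3) \<le> \<bar>e1\<bar> * LC * (norm w)\<^sup>2"
    using mult_nth_mult_le_norm_power2[of "e1 * LC" w 2 3] pos by (simp add: abs_mult)
  moreover have "e2 * C * (w$1 * w$4) \<le> \<bar>e2\<bar> * C * (norm w)\<^sup>2"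
    using mult_nth_mult_le_norm_power2[of "e2 * C" w 1 4] pos by (simp add: abs_mult)
  moreover have "\<bar>e1\<bar> * LC * (norm w)\<^sup>2 + \<bar>e2\<bar> * C * (norm w)\<^sup>2 \<le> m / 2 * (norm w)\<^sup>2"
    unfolding distrib_right[symmetric] using small by (rule mult_right_mono) simp
  ultimately show ?thesis
    using m[of w] by linarith
qed

lemma lyapunov_decrease:
  assumes "0 < e1" "e1 * LC \<le> bC / (8 * aC)" "e1 * (4 * RL * aC\<^sup>2 + 4 * aC * bC) \<le> cC"
    and "0 < e2"
    and "e2 * (4 * aC / bC + 4 / RL + 4 * RL * (C * bV / LV)\<^sup>2 + D) \<le> 1"
    and "e2 * (8 * RL * (C * aV / LV)) \<le> 1"
    and "e2 * \<Delta> \<le> 4 * (bV\<^sup>2 + 1)"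
    and "e2 * (32 * RL * (C * cV / LV)\<^sup>2 * (bV\<^sup>2 + 1)) \<le> cV\<^sup>2"
  shows "\<exists>\<omega>>0. \<forall>w u. lyapunov_deriv e1 e2 w (node_field u w)
           \<le> - \<omega> * (norm w)\<^sup>2 + ((w$1 - e2 * w$4) * u - D * e2\<^sup>2 / 2 * (w$4)\<^sup>2)"
proof -
  have "0 < bV\<^sup>2 + 1"
    by (intro add_nonneg_pos) simp_all
  obtain \<omega> where "0 < \<omega>" and \<omega>: "\<And>w::real^5. \<omega> * (norm w)\<^sup>2
      \<le> 3 / (8 * RL) * (w$1)\<^sup>2 + 5 * bC / (8 * aC) * (w$2)\<^sup>2 + e1 * cC / 2 * (w$3)\<^sup>2
         + e2 / 4 * (w$4)\<^sup>2 + e2 * cV\<^sup>2 / (16 * (bV\<^sup>2 + 1)) * (w$5)\<^sup>2"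
    using diagonal_form_5_lower_bound[of "3 / (8 * RL)" "5 * bC / (8 * aC)" "e1 * cC / 2" "e2 / 4"
        "e2 * cV\<^sup>2 / (16 * (bV\<^sup>2 + 1))"] pos assms(1,4) \<open>0 < bV\<^sup>2 + 1\<close> by auto
  have "lyapunov_deriv e1 e2 w (node_field u w)
      \<le> - \<omega> * (norm w)\<^sup>2 + ((w$1 - e2 * w$4) * u - D * e2\<^sup>2 / 2 * (w$4)\<^sup>2)" for w u
  proof -
    have "3 / (8 * RL) * (w$1)\<^sup>2 = 3 * ((w$1)\<^sup>2 / RL) / 8"
      and "5 * bC / (8 * aC) * (w$2)\<^sup>2 = 5 * (bC / aC * (w$2)\<^sup>2) / 8"
      and "e1 * cC / 2 * (w$3)\<^sup>2 = e1 * cC * (w$3)\<^sup>2 / 2"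
      and "e2 / 4 * (w$4)\<^sup>2 = e2 * (w$4)\<^sup>2 / 4"
      and "e2 * cV\<^sup>2 / (16 * (bV\<^sup>2 + 1)) * (w$5)\<^sup>2 = e2 * cV\<^sup>2 / (bV\<^sup>2 + 1) * (w$5)\<^sup>2 / 16"
      by simp_all
    note facts = this lyapunov_deriv_node_field[of e1 e2 w u] \<omega>[of w]
        current_loop_estimate[OF less_imp_le[OF assms(1)] assms(2,3), of "w$1" "w$3" "w$2"]
        voltage_loop_estimate[OF less_imp_le[OF assms(4)] assms(5-8), of "w$2" "w$4" "w$1" "w$5"]
    \<comment> \<open>Naming the monomials stops linarith from normalising them into incomparable atoms.\<close>
    define A1 A2 A3 A4 A5 where "A1 = (w$1)\<^sup>2 / RL" and "A2 = bC / aC * (w$2)\<^sup>2"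
      and "A3 = e1 * cC * (w$3)\<^sup>2" and "A4 = e2 * (w$4)\<^sup>2" and "A5 = e2 * cV\<^sup>2 / (bV\<^sup>2 + 1) * (w$5)\<^sup>2"
    define P Q where "P = aC * w$1 * w$3 + bC * w$2 * w$3 - cC * (w$3)\<^sup>2 + LC * (w$2)\<^sup>2"
      and "Q = - w$2 * w$4 - (w$4)\<^sup>2 + w$1 * w$4 / RL + C * aV / LV * (w$1)\<^sup>2
             + C * bV / LV * w$1 * w$4 - C * cV / LV * w$1 * w$5"
    show ?thesis
      using facts[folded A1_def A2_def A3_def A4_def A5_def P_def Q_def]
      by linarith
  qed
  with \<open>0 < \<omega>\<close> show ?thesis by blast
qed

definition strict_lyapunov_weights :: "real \<Rightarrow> real \<Rightarrow> real \<Rightarrow> bool" where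
  "strict_lyapunov_weights D e1 e2 \<longleftrightarrow>
     (\<exists>m>0. \<forall>w. m * (norm w)\<^sup>2 \<le> lyapunov e1 e2 w) \<and>
     (\<exists>M. \<forall>w. lyapunov e1 e2 w \<le> M * (norm w)\<^sup>2) \<and>
     (\<exists>\<omega>>0. \<forall>w u. lyapunov_deriv e1 e2 w (node_field u w)
        \<le> - \<omega> * (norm w)\<^sup>2 + ((w$1 - e2 * w$4) * u - D * e2\<^sup>2 / 2 * (w$4)\<^sup>2))"

lemma strict_lyapunov_weights_exist: "\<exists>e1 e2. strict_lyapunov_weights D e1 e2"
proof -
  obtain m where "0 < m" and m: "\<And>w. m * (norm w)\<^sup>2 \<le> lyapunov 0 0 w"
    using lyapunov_energy_coercive by blast
  have "\<forall>\<^sub>F e1 in at_right 0. 0 < e1 \<and> e1 * LC \<le> bC / (8 * aC)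
      \<and> e1 * (4 * RL * aC\<^sup>2 + 4 * aC * bC) \<le> cC \<and> e1 * LC \<le> m / 4"
    using pos \<open>0 < m\<close> by (intro eventually_conj eventually_at_right_less eventually_at_right_0_mult_le) simp_all
  then obtain e1 where e1: "0 < e1" "e1 * LC \<le> bC / (8 * aC)"
      "e1 * (4 * RL * aC\<^sup>2 + 4 * aC * bC) \<le> cC" "e1 * LC \<le> m / 4"
    using eventually_happens'[OF trivial_limit_at_right_real] by blast
  have "\<forall>\<^sub>F e2 in at_right 0. 0 < e2
      \<and> e2 * (4 * aC / bC + 4 / RL + 4 * RL * (C * bV / LV)\<^sup>2 + D) \<le> 1
      \<and> e2 * (8 * RL * (C * aV / LV)) \<le> 1 \<and> e2 * \<Delta> \<le> 4 * (bV\<^sup>2 + 1)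
      \<and> e2 * (32 * RL * (C * cV / LV)\<^sup>2 * (bV\<^sup>2 + 1)) \<le> cV\<^sup>2 \<and> e2 * C \<le> m / 4"
    using pos \<open>0 < m\<close>
    by (intro eventually_conj eventually_at_right_less eventually_at_right_0_mult_le) (simp_all add: add_nonneg_pos)
  then obtain e2 where e2: "0 < e2" "e2 * (4 * aC / bC + 4 / RL + 4 * RL * (C * bV / LV)\<^sup>2 + D) \<le> 1"
      "e2 * (8 * RL * (C * aV / LV)) \<le> 1" "e2 * \<Delta> \<le> 4 * (bV\<^sup>2 + 1)"
      "e2 * (32 * RL * (C * cV / LV)\<^sup>2 * (bV\<^sup>2 + 1)) \<le> cV\<^sup>2" "e2 * C \<le> m / 4"
    using eventually_happens'[OF trivial_limit_at_right_real] by blast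
  have "\<forall>w. m / 2 * (norm w)\<^sup>2 \<le> lyapunov e1 e2 w"
    using lyapunov_lower_bound[OF m] e1(1,4) e2(1,6) by simp
  then have "strict_lyapunov_weights D e1 e2"
    unfolding strict_lyapunov_weights_def
    using \<open>0 < m\<close> lyapunov_upper_bound lyapunov_decrease[OF e1(1-3) e2(1-5)] by (auto intro!: exI[of _ "m / 2"])
  then show ?thesis by blast
qed

end

lemma microgrid_node_strict_lyapunov:
  fixes Ct LC RC LV RV RL kC1 kC2 kC3 kV1 kV2 kV3 D :: real
  assumes "Ct > 0 \<and> LC > 0 \<and> RC > 0 \<and> LV > 0 \<and> RV > 0 \<and> RL > 0"
    and "kC1 < 1 \<and> kC2 < RC \<and> kC3 > 0 \<and> kV1 < 1 \<and> kV2 < RV \<and> 0 < kV3 \<and> kV3 < (1 / LV) * (kV1 - 1) * (kV2 - RV)"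
  shows "\<exists>e2 S dS. (\<exists>m>0. \<forall>w. m * (norm w)\<^sup>2 \<le> S w) \<and> (\<exists>M. \<forall>w. S w \<le> M * (norm w)\<^sup>2) \<and>
     (\<forall>g g' t T. (g has_vector_derivative g') (at t within T) \<longrightarrow>
        ((\<lambda>s. S (g s)) has_real_derivative dS (g t) g') (at t within T)) \<and>
     (\<exists>\<omega>>0. \<forall>w u. dS w (Floc Ct LC RC LV RV kC1 kC2 kC3 kV1 kV2 kV3 *v w + ((u - w$1 / RL) / Ct) *\<^sub>R axis 1 1)
        \<le> - \<omega> * (norm w)\<^sup>2 + ((w$1 - e2 * w$4) * u - D * e2\<^sup>2 / 2 * (w$4)\<^sup>2))"
proof -
  interpret dc_microgrid_node Ct LC LV RL "1 - kC1" "RC - kC2" kC3 "1 - kV1" "RV - kV2" kV3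
    using assms by unfold_locales (auto simp: field_simps)
  have field: "Floc Ct LC RC LV RV kC1 kC2 kC3 kV1 kV2 kV3 *v w + ((u - w$1 / RL) / Ct) *\<^sub>R axis 1 1
      = node_field u w" for u w
    using pos unfolding vec_eq_iff forall_5
    by (simp add: Floc_def node_field_def matrix_vector_mult_def sum_5 axis_def field_simps)
  obtain e1 e2 where "strict_lyapunov_weights D e1 e2"
    using strict_lyapunov_weights_exist by blast
  then show ?thesis
    unfolding strict_lyapunov_weights_def field
    by (intro exI[of _ e2] exI[of _ "lyapunov e1 e2"] exI[of _ "lyapunov_deriv e1 e2"])
      (auto intro: lyapunov_has_real_derivative)
qed

theorem theorem2:
  fixes E :: "'n::finite \<Rightarrow> 'n \<Rightarrow> bool"
    and R :: "'n \<Rightarrow> 'n \<Rightarrow> real"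
    and Ct LC RC LV RV RL kC1 kC2 kC3 kV1 kV2 kV3 :: "'n \<Rightarrow> real"
  assumes E_sym: "\<And>i j. E i j \<Longrightarrow> E j i"
    and E_irrefl: "\<And>i. \<not> E i i"
    and connected: "\<And>i j. E\<^sup>*\<^sup>* i j"
    and R_sym: "\<And>i j. E i j \<Longrightarrow> R i j = R j i"
    and R_pos: "\<And>i j. E i j \<Longrightarrow> R i j > 0"
    and pos: "\<And>i. Ct i > 0 \<and> LC i > 0 \<and> RC i > 0 \<and> LV i > 0 \<and> RV i > 0 \<and> RL i > 0"
    and gains: "\<And>i. kC1 i < 1 \<and> kC2 i < RC i \<and> kC3 i > 0 \<and> kV1 i < 1 \<and> kV2 i < RV i \<and>
                   0 < kV3 i \<and> kV3 i < (1 / LV i) * (kV1 i - 1) * (kV2 i - RV i)"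
  shows "asymptotically_stable_origin
           (Fsys E R RL Ct
              (\<lambda>i. Floc (Ct i) (LC i) (RC i) (LV i) (RV i)
                     (kC1 i) (kC2 i) (kC3 i) (kV1 i) (kV2 i) (kV3 i)))"
proof -
  define Fl where "Fl = (\<lambda>i. Floc (Ct i) (LC i) (RC i) (LV i) (RV i) (kC1 i) (kC2 i) (kC3 i) (kV1 i) (kV2 i) (kV3 i))"
  define D where "D i = (\<Sum>j\<in>{j. E i j}. 1 / R i j)" for i
  define u where "u x i = (\<Sum>j\<in>{j. E i j}. (x$j$1 - x$i$1) / R i j)" for x :: "real^5^'n" and i
  show ?thesis
    unfolding Fl_def[symmetric]
  proof (rule separable_lyapunov_imp_asymptotically_stable
      [where r = "\<lambda>i e x. (x$i$1 - e * x$i$4) * u x i - D i * e\<^sup>2 / 2 * (x$i$4)\<^sup>2"])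
    show "Fsys E R RL Ct Fl 0 = 0"
      by (simp add: Fsys_def vec_eq_iff)
    show "\<exists>e2 S dS. (\<exists>m>0. \<forall>w. m * (norm w)\<^sup>2 \<le> S w) \<and> (\<exists>M. \<forall>w. S w \<le> M * (norm w)\<^sup>2) \<and>
        (\<forall>g g' t T. (g has_vector_derivative g') (at t within T) \<longrightarrow>
           ((\<lambda>s. S (g s)) has_real_derivative dS (g t) g') (at t within T)) \<and>
        (\<exists>\<omega>>0. \<forall>x. dS (x $ i) (Fsys E R RL Ct Fl x $ i)
           \<le> - \<omega> * (norm (x $ i))\<^sup>2 + ((x$i$1 - e2 * x$i$4) * u x i - D i * e2\<^sup>2 / 2 * (x$i$4)\<^sup>2))" for i
      using microgrid_node_strict_lyapunov[OF pos[of i] gains[of i], of "D i"]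
      unfolding Fsys_nth[where E = E, OF E_irrefl] u_def Fl_def by blast
    show "(\<Sum>i\<in>UNIV. (x$i$1 - e2 i * x$i$4) * u x i - D i * (e2 i)\<^sup>2 / 2 * (x$i$4)\<^sup>2) \<le> 0" for e2 x
      using laplacian_coupling_le[of E R "\<lambda>i. x$i$1" e2 "\<lambda>i. x$i$4", OF E_sym R_sym R_pos]
      unfolding sum_subtractf u_def D_def by linarith
  qed
qed

end
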